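(* Let $0\le\lambda<\gamma\le\delta$. If $F_1,F_2\in\mathcal{R}(\gamma,\delta,\lambda)$, then $F_1\ast F_2\in\mathcal{R}(\gamma,\delta,\lambda)$.
   Context: Let $\mathcal{U}=\{z\in\mathbb{C}:|z|<1\}$ and let $\mathcal{A}$ be the class of analytic functions $F$ in $\mathcal{U}$ with $F(0)=0$, $F'(0)=1$. For real $0\le\lambda<\gamma\le\delta$, $\mathcal{R}(\gamma,\delta,\lambda)$ is the class of $F\in\mathcal{A}$ such that $\mathrm{Re}\{\gamma F'(z)+\delta zF''(z)+\frac{\delta-\gamma}{2}z^2F'''(z)\}>\lambda$ for all $z\in\mathcal{U}$. For $F_1(z)=z+\sum_{m\ge2}A_mz^m$ and $F_2(z)=z+\sum_{m\ge2}B_mz^m$, the convolution (Hadamard product) is $(F_1\ast F_2)(z)=z+\sum_{m\ge2}A_mB_mz^m$. *)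

theory Defs
  imports "HOL-Complex_Analysis.Complex_Analysis"
begin

abbreviation unit_disc :: "complex set" where
  "unit_disc \<equiv> ball 0 1"

definition class_A :: "(complex \<Rightarrow> complex) set" where
  "class_A = {F. F holomorphic_on unit_disc \<and> F 0 = 0 \<and> deriv F 0 = 1}"

definition class_R :: "real \<Rightarrow> real \<Rightarrow> real \<Rightarrow> (complex \<Rightarrow> complex) set" where
  "class_R gam del lam = {F \<in> class_A. \<forall>z \<in> unit_disc.
      Re (of_real gam * deriv F z + of_real del * z * (deriv ^^ 2) F z
          + of_real ((del - gam) / 2) * z ^ 2 * (deriv ^^ 3) F z) > lam}"

definition taylor_coeff :: "(complex \<Rightarrow> complex) \<Rightarrow> nat \<Rightarrow> complex" where
  "taylor_coeff F n = (deriv ^^ n) F 0 / fact n"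

definition hadamard :: "(complex \<Rightarrow> complex) \<Rightarrow> (complex \<Rightarrow> complex) \<Rightarrow> complex \<Rightarrow> complex" where
  "hadamard F1 F2 z = (\<Sum>n. taylor_coeff F1 n * taylor_coeff F2 n * z ^ n)"

end

theory Submission
  imports Defs
begin

text \<open>
  Writing \<open>F(z) = \<Sum> a\<^sub>n z\<^sup>n\<close>, the operator defining \<open>\<R>(\<gamma>,\<delta>,\<lambda>)\<close> is
  \<open>\<gamma>F' + \<delta>zF'' + (\<delta>-\<gamma>)/2 z\<^sup>2F''' = \<Sum> c\<^sub>m a\<^sub>m\<^sub>+\<^sub>1 z\<^sup>m\<close> with
  \<open>c\<^sub>m = (m+1)\<^sup>2((\<delta>-\<gamma>)m + 2\<gamma>)/2\<close>. If \<open>g\<^sub>m\<close>, \<open>h\<^sub>m\<close> are the coefficients of this operator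
  applied to \<open>F\<^sub>1\<close>, \<open>F\<^sub>2\<close>, then for the Hadamard product it has coefficients \<open>g\<^sub>m h\<^sub>m / c\<^sub>m\<close>.

  The sequence \<open>\<epsilon>\<^sub>k = (\<gamma>-\<lambda>)/c\<^sub>k\<close> is nonnegative, decreasing and convex, so by Fejer's
  inequality the kernel \<open>1 + 4\<Sum>\<^sub>k\<^sub>\<ge>\<^sub>1 \<epsilon>\<^sub>k w\<^sup>k\<close> has real part bounded below by a positive
  constant on the unit circle. Integrating \<open>(Re X - \<lambda>)(Re Y - c) \<ge> 0\<close> over the circle gives a
  lower bound for the real part of a Hadamard product whose factors have real parts at least
  \<open>\<lambda>\<close> and \<open>c\<close>; applying it twice, first to the kernel and \<open>h\<close>, then to the result and
  \<open>g\<close>, on a circle of radius \<open>\<surd>|z|\<close>, shows that the real part stays above \<open>\<lambda>\<close>.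
\<close>

section \<open>Trigonometric series on the unit circle\<close>

lemma continuous_on_suminf_Weierstrass:
  fixes f :: "nat \<Rightarrow> real \<Rightarrow> 'a::banach"
  assumes "\<And>n. continuous_on {a..b} (f n)"
    and "\<And>n t. t \<in> {a..b} \<Longrightarrow> norm (f n t) \<le> M n" and "summable M"
  shows "continuous_on {a..b} (\<lambda>t. \<Sum>n. f n t)"
  by (rule uniform_limit_theorem[OF _ Weierstrass_m_test[OF assms(2,3)]])
     (auto intro!: always_eventually continuous_on_sum assms(1))

lemma has_integral_suminf_Weierstrass:
  fixes f :: "nat \<Rightarrow> real \<Rightarrow> 'a::banach"
  assumes cont: "\<And>n. continuous_on {a..b} (f n)"
    and bound: "\<And>n t. t \<in> {a..b} \<Longrightarrow> norm (f n t) \<le> M n" and "summable M"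
  shows "((\<lambda>t. \<Sum>n. f n t) has_integral (\<Sum>n. integral {a..b} (f n))) {a..b}"
proof -
  have partial: "((\<lambda>t. \<Sum>i<n. f i t) has_integral (\<Sum>i<n. integral {a..b} (f i))) {a..b}" for n
    by (intro has_integral_sum) (auto intro!: integrable_integral integrable_continuous_interval cont)
  obtain I J where I: "\<And>n. ((\<lambda>t. \<Sum>i<n. f i t) has_integral I n) {a..b}"
    and J: "((\<lambda>t. \<Sum>i. f i t) has_integral J) {a..b}" and "I \<longlonglongrightarrow> J"
    using uniform_limit_integral[OF Weierstrass_m_test[OF bound \<open>summable M\<close>]
        continuous_on_sum[OF cont]] by auto
  moreover have "I = (\<lambda>n. \<Sum>i<n. integral {a..b} (f i))"
    using has_integral_unique[OF I partial] by blast
  ultimately have "(\<lambda>i. integral {a..b} (f i)) sums J"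
    by (simp add: sums_def)
  with J show ?thesis
    by (simp add: sums_iff)
qed

lemma has_integral_cis_int:
  "((\<lambda>t. cis (of_int m * t)) has_integral (if m = 0 then 2 * pi else 0)) {0..2*pi}"
proof (cases "m = 0")
  case True
  then show ?thesis
    using has_integral_const_real[of "1::complex" 0 "2*pi"] by (simp add: scaleR_conv_of_real)
next
  case False
  define g where "g z = exp (\<i> * of_int m * z) / (\<i> * of_int m)" for z :: complex
  have "((\<lambda>t. g (of_real t)) has_vector_derivative cis (of_int m * t)) (at t within {0..2*pi})" for t
  proof -
    have "(g has_field_derivative exp (\<i> * of_int m * of_real t)) (at (of_real t))"
      unfolding g_def using False by (auto intro!: derivative_eq_intros)
    from has_vector_derivative_real_field[OF this] show ?thesis
      by (simp add: cis_conv_exp mult.assoc)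
  qed
  then have "((\<lambda>t. cis (of_int m * t)) has_integral g (of_real (2*pi)) - g (of_real 0)) {0..2*pi}"
    by (intro fundamental_theorem_of_calculus[where f="\<lambda>t. g (of_real t)"]) auto
  moreover have "exp (\<i> * of_int m * of_real (2*pi)) = 1"
    using exp_integer_2pi[of "of_int m"] by (simp add: algebra_simps)
  ultimately show ?thesis
    using False by (simp add: g_def)
qed

lemma
  fixes p :: "nat \<Rightarrow> complex" and \<sigma> :: "nat \<Rightarrow> int"
  assumes p: "summable (\<lambda>n. norm (p n))"
  shows has_integral_trig_series:
      "((\<lambda>t. \<Sum>n. p n * cis (of_int (\<sigma> n) * t)) has_integral
         (2 * pi * (\<Sum>n. if \<sigma> n = 0 then p n else 0))) {0..2*pi}"
    and continuous_on_trig_series: "continuous_on {0..2*pi} (\<lambda>t. \<Sum>n. p n * cis (of_int (\<sigma> n) * t))"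
proof -
  have cont: "continuous_on {0..2*pi} (\<lambda>t. p n * cis (of_int (\<sigma> n) * t))" for n
    by (intro continuous_intros)
  have bound: "norm (p n * cis (of_int (\<sigma> n) * t)) \<le> norm (p n)" for n t
    by (simp add: norm_mult)
  show "continuous_on {0..2*pi} (\<lambda>t. \<Sum>n. p n * cis (of_int (\<sigma> n) * t))"
    by (rule continuous_on_suminf_Weierstrass[OF cont bound p])
  have "integral {0..2*pi} (\<lambda>t. p n * cis (of_int (\<sigma> n) * t)) = 2 * pi * (if \<sigma> n = 0 then p n else 0)" for n
    using has_integral_mult_right[OF has_integral_cis_int[of "\<sigma> n"], of "p n"]
    by (auto dest!: integral_unique simp: mult.commute)
  moreover have "summable (\<lambda>n. if \<sigma> n = 0 then p n else 0)"
    by (rule summable_comparison_test'[OF p, of 0]) auto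
  ultimately show "((\<lambda>t. \<Sum>n. p n * cis (of_int (\<sigma> n) * t)) has_integral
         (2 * pi * (\<Sum>n. if \<sigma> n = 0 then p n else 0))) {0..2*pi}"
    using has_integral_suminf_Weierstrass[OF cont bound p] by (simp add: suminf_mult)
qed

lemma has_integral_trig_series_shifted:
  fixes q :: "nat \<Rightarrow> complex"
  assumes q: "summable (\<lambda>n. norm (q n))"
  shows "((\<lambda>t. \<Sum>k. q k * cis (of_int (m - int k) * t)) has_integral
           (2 * pi * (if m \<ge> 0 then q (nat m) else 0))) {0..2*pi}"
proof -
  have "(\<lambda>k. if m - int k = 0 then q k else 0) =
        (\<lambda>k. if k = nat m then (if m \<ge> 0 then q k else 0) else 0)"
    by auto
  then have "(\<Sum>k. if m - int k = 0 then q k else 0) = (if m \<ge> 0 then q (nat m) else 0)"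
    using sums_single[of "nat m" "\<lambda>k. if m \<ge> 0 then q k else 0"] by (simp add: sums_iff)
  then show ?thesis
    using has_integral_trig_series[OF q, of "\<lambda>k. m - int k"] by simp
qed

lemma trig_series_mult:
  fixes p q :: "nat \<Rightarrow> complex" and \<sigma> :: "nat \<Rightarrow> int"
  assumes p: "summable (\<lambda>n. norm (p n))" and q: "summable (\<lambda>n. norm (q n))"
  shows "(\<Sum>n. p n * cis (of_int (\<sigma> n) * t)) * (\<Sum>k. q k * cis (- of_nat k * t)) =
         (\<Sum>n. p n * (\<Sum>k. q k * cis (of_int (\<sigma> n - int k) * t)))"
proof -
  have summable_trig: "summable (\<lambda>n. c n * cis (x n))" if "summable (\<lambda>n. norm (c n))" for c :: "nat \<Rightarrow> complex" and x
    by (rule summable_norm_cancel) (simp add: norm_mult that)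
  have "cis (of_int (\<sigma> n) * t) * (\<Sum>k. q k * cis (- of_nat k * t)) =
        (\<Sum>k. q k * cis (of_int (\<sigma> n - int k) * t))" for n
  proof -
    have "cis (of_int (\<sigma> n) * t) * (\<Sum>k. q k * cis (- of_nat k * t)) =
          (\<Sum>k. cis (of_int (\<sigma> n) * t) * (q k * cis (- of_nat k * t)))"
      by (rule suminf_mult[symmetric]) (rule summable_trig[OF q])
    also have "\<dots> = (\<Sum>k. q k * cis (of_int (\<sigma> n - int k) * t))"
      by (intro suminf_cong) (simp add: cis_mult algebra_simps)
    finally show ?thesis .
  qed
  then show ?thesis
    using suminf_mult2[OF summable_trig[OF p]] by (simp add: mult.assoc)
qed

lemma has_integral_trig_series_mult:
  fixes p q :: "nat \<Rightarrow> complex" and \<sigma> :: "nat \<Rightarrow> int"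
  assumes p: "summable (\<lambda>n. norm (p n))" and q: "summable (\<lambda>n. norm (q n))"
  shows "((\<lambda>t. (\<Sum>n. p n * cis (of_int (\<sigma> n) * t)) * (\<Sum>k. q k * cis (- of_nat k * t))) has_integral
           (2 * pi * (\<Sum>n. p n * (if \<sigma> n \<ge> 0 then q (nat (\<sigma> n)) else 0)))) {0..2*pi}"
proof -
  define S where "S = (\<Sum>k. norm (q k))"
  have q_le_S: "norm (q j) \<le> S" for j
    unfolding S_def using sum_le_suminf[OF q, of "{j}"] by simp
  then have "0 \<le> S"
    using norm_ge_zero order.trans by blast
  have cont: "continuous_on {0..2*pi} (\<lambda>t. p n * (\<Sum>k. q k * cis (of_int (\<sigma> n - int k) * t)))" for n
    by (rule continuous_on_mult_left[OF continuous_on_trig_series[OF q, of "\<lambda>k. \<sigma> n - int k"]])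
  have bound: "norm (p n * (\<Sum>k. q k * cis (of_int (\<sigma> n - int k) * t))) \<le> norm (p n) * S" for n t
  proof -
    have "norm (\<Sum>k. q k * cis (of_int (\<sigma> n - int k) * t)) \<le> S"
      using summable_norm[of "\<lambda>k. q k * cis (of_int (\<sigma> n - int k) * t)"] q
      by (simp add: norm_mult S_def)
    then show ?thesis
      by (simp add: norm_mult mult_left_mono)
  qed
  have summable_bound: "summable (\<lambda>n. norm (p n) * S)"
    by (intro summable_mult2 p)
  have integral_term: "integral {0..2*pi} (\<lambda>t. p n * (\<Sum>k. q k * cis (of_int (\<sigma> n - int k) * t))) =
      2 * pi * (p n * (if \<sigma> n \<ge> 0 then q (nat (\<sigma> n)) else 0))" for n
    using integral_unique[OF has_integral_mult_right[OF has_integral_trig_series_shifted[OF q, of "\<sigma> n"], of "p n"]]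
    by (simp add: algebra_simps)
  have "summable (\<lambda>n. p n * (if \<sigma> n \<ge> 0 then q (nat (\<sigma> n)) else 0))"
    by (rule summable_comparison_test'[OF summable_bound, of 0])
       (auto simp: norm_mult q_le_S \<open>0 \<le> S\<close> intro!: mult_left_mono)
  then have "(\<Sum>n. integral {0..2*pi} (\<lambda>t. p n * (\<Sum>k. q k * cis (of_int (\<sigma> n - int k) * t)))) =
      2 * pi * (\<Sum>n. p n * (if \<sigma> n \<ge> 0 then q (nat (\<sigma> n)) else 0))"
    unfolding integral_term by (rule suminf_mult)
  then show ?thesis
    unfolding trig_series_mult[OF p q]
    using has_integral_suminf_Weierstrass[OF cont bound summable_bound] by simp
qed

lemma has_integral_Re_mult_trig_series:
  fixes a q :: "nat \<Rightarrow> complex"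
  assumes a: "summable (\<lambda>n. norm (a n))" and q: "summable (\<lambda>n. norm (q n))"
  shows "((\<lambda>t. Re (\<Sum>n. a n * cis (real n * t)) * Re (\<Sum>k. q k * cis (- real k * t))) has_integral
           pi * Re ((\<Sum>n. a n * q n) + cnj (a 0) * q 0)) {0..2*pi}"
proof -
  define X where "X t = (\<Sum>n. a n * cis (real n * t))" for t
  define Y where "Y t = (\<Sum>k. q k * cis (- real k * t))" for t
  have cnj_a: "summable (\<lambda>n. norm (cnj (a n)))"
    using a by simp
  have cnj_X: "cnj (X t) = (\<Sum>n. cnj (a n) * cis (of_int (- int n) * t))" for t
  proof -
    have "summable (\<lambda>n. a n * cis (real n * t))"
      by (rule summable_comparison_test'[OF a, of 0]) (simp add: norm_mult)
    then have "(\<lambda>n. cnj (a n * cis (real n * t))) sums cnj (X t)"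
      unfolding X_def by (rule sums_cnj[THEN iffD2, OF summable_sums])
    then show ?thesis
      by (simp add: sums_iff cis_cnj)
  qed
  have XY: "((\<lambda>t. X t * Y t) has_integral (2 * pi * (\<Sum>n. a n * q n))) {0..2*pi}"
    using has_integral_trig_series_mult[OF a q, of int] by (simp add: X_def Y_def)
  have "(\<lambda>n. cnj (a n) * (if - int n \<ge> 0 then q (nat (- int n)) else 0)) =
        (\<lambda>n. if n = 0 then cnj (a n) * q n else 0)"
    by auto
  then have "(\<Sum>n. cnj (a n) * (if - int n \<ge> 0 then q (nat (- int n)) else 0)) = cnj (a 0) * q 0"
    using sums_single[of 0 "\<lambda>n. cnj (a n) * q n"] by (simp add: sums_iff)
  then have cnj_XY: "((\<lambda>t. cnj (X t) * Y t) has_integral (2 * pi * (cnj (a 0) * q 0))) {0..2*pi}"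
    using has_integral_trig_series_mult[OF cnj_a q, of "\<lambda>n. - int n"]
    by (simp add: cnj_X Y_def del: of_int_minus)
  have integral_product: "((\<lambda>t. (X t * Y t + cnj (X t) * Y t) / 2) has_integral
      (2 * pi * (\<Sum>n. a n * q n) + 2 * pi * (cnj (a 0) * q 0)) / 2) {0..2*pi}"
    by (intro has_integral_divide has_integral_add XY cnj_XY)
  have Re_product: "(\<lambda>t. Re ((X t * Y t + cnj (X t) * Y t) / 2)) = (\<lambda>t. Re (X t) * Re (Y t))"
    by (simp add: fun_eq_iff algebra_simps)
  have Re_value: "Re ((2 * pi * (\<Sum>n. a n * q n) + 2 * pi * (cnj (a 0) * q 0)) / 2) =
      pi * Re ((\<Sum>n. a n * q n) + cnj (a 0) * q 0)"
    by (simp add: algebra_simps)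
  from has_integral_Re[OF integral_product]
  have "((\<lambda>t. Re (X t) * Re (Y t)) has_integral pi * Re ((\<Sum>n. a n * q n) + cnj (a 0) * q 0)) {0..2*pi}"
    unfolding Re_product Re_value .
  then show ?thesis
    unfolding X_def Y_def .
qed

lemma Re_hadamard_boundary_ge:
  fixes a b :: "nat \<Rightarrow> complex" and a0 lam c :: real and \<zeta> :: complex
  assumes a: "summable (\<lambda>n. norm (a n))" and b: "summable (\<lambda>n. norm (b n))"
    and a0: "a 0 = of_real a0"
    and Re_a: "\<And>w. norm w = 1 \<Longrightarrow> lam \<le> Re (\<Sum>n. a n * w ^ n)"
    and Re_b: "\<And>w. norm w = 1 \<Longrightarrow> c \<le> Re (\<Sum>n. b n * w ^ n)"
    and \<zeta>: "norm \<zeta> = 1"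
  shows "2 * c * (a0 - lam) - Re (b 0) * (a0 - 2 * lam) \<le> Re (\<Sum>n. a n * b n * \<zeta> ^ n)"
proof -
  define q where "q k = b k * \<zeta> ^ k" for k
  have q: "summable (\<lambda>k. norm (q k))"
    using b \<zeta> by (simp add: q_def norm_mult norm_power)
  define X where "X t = (\<Sum>n. a n * cis (real n * t))" for t
  define Y where "Y t = (\<Sum>k. q k * cis (- real k * t))" for t
  have Re_X: "lam \<le> Re (X t)" for t
    using Re_a[of "cis t"] by (simp add: X_def Complex.DeMoivre)
  have Re_Y: "c \<le> Re (Y t)" for t
    using Re_b[of "\<zeta> * cis (- t)"] \<zeta>
    by (simp add: Y_def q_def Complex.DeMoivre power_mult_distrib mult_ac norm_mult)
  have integral_X: "((\<lambda>t. Re (X t)) has_integral 2 * pi * a0) {0..2*pi}"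
    using has_integral_Re[OF has_integral_trig_series[OF a, of int]] sums_single[of 0 a]
    by (simp add: X_def sums_iff a0)
  have integral_Y: "((\<lambda>t. Re (Y t)) has_integral 2 * pi * Re (q 0)) {0..2*pi}"
    using has_integral_Re[OF has_integral_trig_series[OF q, of "\<lambda>k. - int k"]] sums_single[of 0 q]
    by (simp add: Y_def sums_iff)
  have "((\<lambda>t. Re (X t) * Re (Y t) - lam * Re (Y t) - c * Re (X t) + lam * c) has_integral
      pi * Re ((\<Sum>n. a n * q n) + cnj (a 0) * q 0) - lam * (2 * pi * Re (q 0)) - c * (2 * pi * a0)
      + 2 * pi * (lam * c)) {0..2*pi}"
    unfolding X_def Y_def
    by (intro has_integral_add has_integral_diff has_integral_mult_right
        has_integral_Re_mult_trig_series[OF a q] integral_X[unfolded X_def] integral_Y[unfolded Y_def])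
       (use has_integral_const_real[of "lam * c" 0 "2 * pi"] in simp)
  moreover have "0 \<le> Re (X t) * Re (Y t) - lam * Re (Y t) - c * Re (X t) + lam * c" for t
    using mult_nonneg_nonneg[of "Re (X t) - lam" "Re (Y t) - c"] Re_X[of t] Re_Y[of t]
    by (simp add: algebra_simps)
  ultimately have "0 \<le> pi * Re ((\<Sum>n. a n * q n) + cnj (a 0) * q 0) - lam * (2 * pi * Re (q 0))
      - c * (2 * pi * a0) + 2 * pi * (lam * c)"
    by (rule has_integral_nonneg)
  also have "\<dots> = pi * (Re (\<Sum>n. a n * q n) + a0 * Re (b 0) - 2 * lam * Re (b 0) - 2 * c * a0 + 2 * c * lam)"
    by (simp add: a0 q_def algebra_simps)
  finally have "0 \<le> Re (\<Sum>n. a n * q n) + a0 * Re (b 0) - 2 * lam * Re (b 0) - 2 * c * a0 + 2 * c * lam"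
    using pi_gt_zero by (auto simp: zero_le_mult_iff)
  then show ?thesis
    by (simp add: q_def algebra_simps)
qed

section \<open>Fejer's inequality for convex sequences\<close>

lemma sum_by_parts_twice:
  fixes s c :: "nat \<Rightarrow> real"
  shows "(\<Sum>k\<le>Suc N. s k * c k) =
      (\<Sum>k<N. (s k - 2 * s (k + 1) + s (k + 2)) * (\<Sum>j\<le>k. \<Sum>i\<le>j. c i))
      + (s N - s (Suc N)) * (\<Sum>j\<le>N. \<Sum>i\<le>j. c i) + s (Suc N) * (\<Sum>i\<le>Suc N. c i)"
proof (induction N)
  case 0
  then show ?case
    by (simp add: algebra_simps)
next
  case (Suc N)
  note sum_Suc = sum.atMost_Suc[of _ "Suc N"] sum.atMost_Suc[of _ N] sum.lessThan_Suc[of _ N]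
  show ?case
    by (simp only: sum.atMost_Suc[of _ "Suc N"] Suc.IH) (simp add: sum_Suc algebra_simps)
qed

text \<open>For \<open>w = e\<^sup>i\<^sup>\<theta>\<close> this is \<open>cos k\<theta>\<close>, with the constant term halved as in the Dirichlet kernel.\<close>
definition fejer_cos :: "complex \<Rightarrow> nat \<Rightarrow> real" where
  "fejer_cos w k = (if k = 0 then 1 / 2 else Re (w ^ k))"

lemma abs_fejer_cos_le:
  assumes "norm w = 1"
  shows "\<bar>fejer_cos w k\<bar> \<le> 1"
  using abs_Re_le_cmod[of "w ^ k"] assms by (simp add: fejer_cos_def norm_power)

lemma fejer_kernel_eq:
  assumes w: "norm w = 1"
  shows "(\<Sum>j\<le>n. \<Sum>i\<le>j. fejer_cos w i) = cmod (\<Sum>k\<le>n. w ^ k) ^ 2 / 2"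
proof -
  have w_cnj: "w * cnj w = 1"
    using w by (simp add: complex_norm_square[symmetric])
  have "(\<Sum>k\<le>n. w ^ k) * cnj w ^ Suc n = (\<Sum>i\<le>n. cnj w ^ Suc i)" for n
  proof (induction n)
    case (Suc n)
    have "(\<Sum>k\<le>Suc n. w ^ k) * cnj w ^ Suc (Suc n) =
        cnj w * ((\<Sum>k\<le>n. w ^ k) * cnj w ^ Suc n) + cnj w * (w * cnj w) ^ Suc n"
      by (simp add: algebra_simps power_mult_distrib)
    also have "\<dots> = cnj w * (\<Sum>i\<le>n. cnj w ^ Suc i) + cnj w"
      using Suc.IH w_cnj by simp
    also have "\<dots> = (\<Sum>i\<le>Suc n. cnj w ^ Suc i)"
      by (subst sum.atMost_Suc_shift) (simp add: sum_distrib_left)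
    finally show ?case .
  qed simp
  then have cross: "Re ((\<Sum>k\<le>n. w ^ k) * cnj (w ^ Suc n)) = (\<Sum>i\<le>n. Re (w ^ Suc i))" for n
    by (simp add: Re_sum flip: complex_cnj_power)
  have cmod_add_sq: "cmod (x + y) ^ 2 = cmod x ^ 2 + 2 * Re (x * cnj y) + cmod y ^ 2" for x y
    unfolding cmod_power2 by (simp add: power2_eq_square algebra_simps)
  show ?thesis
  proof (induction n)
    case (Suc n)
    have "cmod (\<Sum>k\<le>Suc n. w ^ k) ^ 2 =
        cmod (\<Sum>k\<le>n. w ^ k) ^ 2 + 2 * Re ((\<Sum>k\<le>n. w ^ k) * cnj (w ^ Suc n)) + 1"
      using w by (simp add: cmod_add_sq norm_power norm_mult)
    also have "Re ((\<Sum>k\<le>n. w ^ k) * cnj (w ^ Suc n)) = (\<Sum>i\<le>n. Re (w ^ Suc i))"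
      by (rule cross)
    finally have norm_sq: "cmod (\<Sum>k\<le>Suc n. w ^ k) ^ 2 = cmod (\<Sum>k\<le>n. w ^ k) ^ 2 + 2 * (\<Sum>i\<le>n. Re (w ^ Suc i)) + 1" .
    have "(\<Sum>i\<le>Suc n. fejer_cos w i) = 1 / 2 + (\<Sum>i\<le>n. Re (w ^ Suc i))"
      by (subst sum.atMost_Suc_shift) (simp add: fejer_cos_def)
    then have "(\<Sum>j\<le>Suc n. \<Sum>i\<le>j. fejer_cos w i) = cmod (\<Sum>k\<le>n. w ^ k) ^ 2 / 2 + (1 / 2 + (\<Sum>i\<le>n. Re (w ^ Suc i)))"
      by (subst sum.atMost_Suc) (simp only: Suc.IH)
    with norm_sq show ?case
      by simp
  qed (simp add: fejer_cos_def)
qed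

lemma convex_cosine_series_nonneg:
  fixes s :: "nat \<Rightarrow> real" and w :: complex
  assumes w: "norm w = 1"
    and convex: "\<And>k. 0 \<le> s k - 2 * s (k + 1) + s (k + 2)"
    and decreasing: "\<And>k. s (Suc k) \<le> s k"
    and nonneg: "\<And>k. 0 \<le> s k"
    and summable: "summable s"
    and lim: "(\<lambda>n. s n * (real n + 1)) \<longlonglongrightarrow> 0"
  shows "0 \<le> (\<Sum>k. s k * fejer_cos w k)"
proof -
  define c where "c = fejer_cos w"
  have fejer_nonneg: "0 \<le> (\<Sum>j\<le>k. \<Sum>i\<le>j. c i)" for k
    by (simp add: c_def fejer_kernel_eq[OF w])
  have partial_sum_ge: "- (s (Suc N) * (real (Suc N) + 1)) \<le> (\<Sum>k<Suc (Suc N). s k * c k)" for N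
  proof -
    have "\<bar>\<Sum>i\<le>Suc N. c i\<bar> \<le> (\<Sum>i\<le>Suc N. 1)"
      using abs_fejer_cos_le[OF w] by (intro order.trans[OF sum_abs] sum_mono) (simp add: c_def)
    then have "\<bar>s (Suc N) * (\<Sum>i\<le>Suc N. c i)\<bar> \<le> s (Suc N) * (real (Suc N) + 1)"
      using nonneg[of "Suc N"] by (simp add: abs_mult mult_left_mono)
    then have "- (s (Suc N) * (real (Suc N) + 1)) \<le> s (Suc N) * (\<Sum>i\<le>Suc N. c i)"
      by linarith
    moreover have "0 \<le> (\<Sum>k<N. (s k - 2 * s (k + 1) + s (k + 2)) * (\<Sum>j\<le>k. \<Sum>i\<le>j. c i))"
      by (intro sum_nonneg mult_nonneg_nonneg convex fejer_nonneg)
    moreover have "0 \<le> (s N - s (Suc N)) * (\<Sum>j\<le>N. \<Sum>i\<le>j. c i)"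
      using decreasing[of N] fejer_nonneg[of N] by simp
    ultimately show ?thesis
      using sum_by_parts_twice[of s c N] by (simp add: lessThan_Suc_atMost)
  qed
  have "summable (\<lambda>k. s k * c k)"
    using abs_fejer_cos_le[OF w] nonneg
    by (intro summable_comparison_test'[OF summable, of 0]) (simp add: c_def abs_mult mult_left_le)
  then have partial_sums: "(\<lambda>N. \<Sum>k<Suc (Suc N). s k * c k) \<longlonglongrightarrow> (\<Sum>k. s k * c k)"
    by (intro filterlim_compose[OF _ filterlim_Suc] filterlim_compose[where f = Suc, OF _ filterlim_Suc])
       (simp add: summable_LIMSEQ)
  have "(\<lambda>N. - (s (Suc N) * (real (Suc N) + 1))) \<longlonglongrightarrow> 0"
    using tendsto_minus[OF filterlim_compose[OF lim filterlim_Suc]] by (simp add: o_def)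
  from LIMSEQ_le[OF this partial_sums] partial_sum_ge show ?thesis
    by (auto simp: c_def)
qed

section \<open>Hadamard products of power series\<close>

lemma taylor_coeff_sums:
  assumes "F holomorphic_on unit_disc" "z \<in> unit_disc"
  shows "(\<lambda>n. taylor_coeff F n * z ^ n) sums F z"
  using holomorphic_power_series[OF assms] by (simp add: taylor_coeff_def)

lemma higher_deriv_sums:
  assumes hol: "F holomorphic_on unit_disc" and z: "z \<in> unit_disc"
  shows "(\<lambda>n. taylor_coeff F (n + j) * (fact (n + j) / fact n) * z ^ n) sums (deriv ^^ j) F z"
proof -
  have "(deriv ^^ j) F holomorphic_on unit_disc"
    by (rule holomorphic_higher_deriv[OF hol]) simp
  moreover have "(deriv ^^ n) ((deriv ^^ j) F) = (deriv ^^ (n + j)) F" for n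
    by (simp add: funpow_add)
  ultimately show ?thesis
    using holomorphic_power_series[of "(deriv ^^ j) F" 0 1 z] z by (simp add: taylor_coeff_def)
qed

lemma summable_norm_dilated:
  fixes g :: "nat \<Rightarrow> complex"
  assumes summable: "\<And>w. w \<in> unit_disc \<Longrightarrow> summable (\<lambda>n. g n * w ^ n)"
    and r: "0 \<le> r" "r < 1"
  shows "summable (\<lambda>n. norm (g n * of_real r ^ n))"
proof -
  define x where "x = (1 + r) / 2"
  have "norm (of_real x :: complex) = x"
    using r by (simp only: norm_of_real) (simp add: x_def)
  then have "of_real x \<in> unit_disc" "norm (of_real r :: complex) < norm (of_real x :: complex)"
    using r by (auto simp: x_def)
  from powser_insidea[OF summable[OF this(1)] this(2)] show ?thesis .
qed

lemma summable_norm_taylor_coeff: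
  assumes "F holomorphic_on unit_disc" "0 \<le> r" "r < 1"
  shows "summable (\<lambda>n. norm (taylor_coeff F n * of_real r ^ n))"
  using sums_summable[OF taylor_coeff_sums[OF assms(1)]] assms(2,3) by (rule summable_norm_dilated)

lemma summable_norm_mult:
  fixes a b :: "nat \<Rightarrow> 'a::real_normed_algebra"
  assumes a: "summable (\<lambda>n. norm (a n))" and b: "summable (\<lambda>n. norm (b n))"
  shows "summable (\<lambda>n. norm (a n * b n))"
proof (rule summable_comparison_test'[OF summable_mult[OF b, of "\<Sum>n. norm (a n)"], of 0])
  fix n
  have "norm (a n) \<le> (\<Sum>n. norm (a n))"
    using sum_le_suminf[OF a, of "{n}"] by simp
  then have "norm (a n) * norm (b n) \<le> (\<Sum>n. norm (a n)) * norm (b n)"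
    by (rule mult_right_mono) simp
  then show "norm (norm (a n * b n)) \<le> (\<Sum>n. norm (a n)) * norm (b n)"
    using norm_mult_ineq[of "a n" "b n"] by simp
qed

lemma one_le_fps_conv_radius_hadamard:
  assumes "F1 holomorphic_on unit_disc" "F2 holomorphic_on unit_disc"
  shows "1 \<le> fps_conv_radius (Abs_fps (\<lambda>n. taylor_coeff F1 n * taylor_coeff F2 n))"
  unfolding fps_conv_radius_def fps_nth_Abs_fps
proof (rule conv_radius_geI_ex')
  fix r :: real
  assume r: "0 < r" "ereal r < 1"
  define \<rho> where "\<rho> = sqrt r"
  have \<rho>: "0 \<le> \<rho>" "\<rho> < 1" "of_real r = (of_real \<rho> :: complex) * of_real \<rho>"
    using r by (auto simp: \<rho>_def real_sqrt_lt_1_iff simp flip: of_real_mult)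
  have "summable (\<lambda>n. norm (taylor_coeff F1 n * of_real \<rho> ^ n * (taylor_coeff F2 n * of_real \<rho> ^ n)))"
    by (intro summable_norm_mult summable_norm_taylor_coeff assms \<rho>(1,2))
  then have "summable (\<lambda>n. taylor_coeff F1 n * of_real \<rho> ^ n * (taylor_coeff F2 n * of_real \<rho> ^ n))"
    by (rule summable_norm_cancel)
  moreover have eq: "taylor_coeff F1 n * taylor_coeff F2 n * of_real r ^ n =
      taylor_coeff F1 n * of_real \<rho> ^ n * (taylor_coeff F2 n * of_real \<rho> ^ n)" for n
    by (simp add: \<rho>(3) power_mult_distrib mult_ac)
  ultimately show "summable (\<lambda>n. taylor_coeff F1 n * taylor_coeff F2 n * of_real r ^ n)"
    by (simp only: eq)
qed

lemma hadamard_eq_eval_fps: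
  "hadamard F1 F2 = eval_fps (Abs_fps (\<lambda>n. taylor_coeff F1 n * taylor_coeff F2 n))"
  by (simp add: fun_eq_iff hadamard_def eval_fps_def)

lemma
  assumes "F1 holomorphic_on unit_disc" "F2 holomorphic_on unit_disc"
  shows holomorphic_on_hadamard: "hadamard F1 F2 holomorphic_on unit_disc"
    and taylor_coeff_hadamard: "taylor_coeff (hadamard F1 F2) n = taylor_coeff F1 n * taylor_coeff F2 n"
proof -
  define c where "c n = taylor_coeff F1 n * taylor_coeff F2 n" for n
  have radius: "1 \<le> fps_conv_radius (Abs_fps c)"
    unfolding c_def by (rule one_le_fps_conv_radius_hadamard[OF assms])
  have "unit_disc \<subseteq> eball 0 (fps_conv_radius (Abs_fps c))"
    using radius by (intro ball_eball_mono) (metis one_ereal_def)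
  then show "hadamard F1 F2 holomorphic_on unit_disc"
    unfolding hadamard_eq_eval_fps c_def[symmetric] by (rule holomorphic_on_eval_fps)
  have "0 < fps_conv_radius (Abs_fps c)"
    by (rule order.strict_trans2[OF _ radius]) simp
  from fps_nth_fps_expansion[OF eval_fps_has_fps_expansion[OF this], of n]
  have "c n = (deriv ^^ n) (eval_fps (Abs_fps c)) 0 / fact n"
    by simp
  then show "taylor_coeff (hadamard F1 F2) n = taylor_coeff F1 n * taylor_coeff F2 n"
    unfolding hadamard_eq_eval_fps c_def[symmetric] taylor_coeff_def[of "eval_fps (Abs_fps c)"] by (rule sym)
qed

lemma hadamard_in_class_A:
  assumes "F1 \<in> class_A" "F2 \<in> class_A"
  shows "hadamard F1 F2 \<in> class_A"
proof -
  have hol: "F1 holomorphic_on unit_disc" "F2 holomorphic_on unit_disc"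
    and "F1 0 = 0" "F2 0 = 0" "deriv F1 0 = 1" "deriv F2 0 = 1"
    using assms by (simp_all add: class_A_def)
  moreover have "taylor_coeff F 0 = F 0" "taylor_coeff F 1 = deriv F 0" for F
    by (simp_all add: taylor_coeff_def)
  ultimately show ?thesis
    using taylor_coeff_hadamard[OF hol, of 0] taylor_coeff_hadamard[OF hol, of 1]
    unfolding class_A_def by (simp add: holomorphic_on_hadamard[OF hol])
qed

section \<open>The operator defining the class R\<close>

definition R_operator :: "real \<Rightarrow> real \<Rightarrow> (complex \<Rightarrow> complex) \<Rightarrow> complex \<Rightarrow> complex" where
  "R_operator gam del F z = of_real gam * deriv F z + of_real del * z * (deriv ^^ 2) F z
      + of_real ((del - gam) / 2) * z ^ 2 * (deriv ^^ 3) F z"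

definition R_weight :: "real \<Rightarrow> real \<Rightarrow> nat \<Rightarrow> real" where
  "R_weight gam del m = (real m + 1) ^ 2 * ((del - gam) * real m + 2 * gam) / 2"

definition R_coeff :: "real \<Rightarrow> real \<Rightarrow> (complex \<Rightarrow> complex) \<Rightarrow> nat \<Rightarrow> complex" where
  "R_coeff gam del F m = of_real (R_weight gam del m) * taylor_coeff F (Suc m)"

lemma R_weight_0 [simp]: "R_weight gam del 0 = gam"
  by (simp add: R_weight_def)

lemma R_weight_ge:
  assumes "0 \<le> gam" "gam \<le> del"
  shows "gam * (real m + 1) ^ 2 \<le> R_weight gam del m"
proof -
  have "(real m + 1) ^ 2 * (2 * gam) \<le> (real m + 1) ^ 2 * ((del - gam) * real m + 2 * gam)"
    using assms by (intro mult_left_mono) auto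
  then show ?thesis
    by (simp add: R_weight_def)
qed

lemma R_weight_ge_gam:
  assumes "0 \<le> gam" "gam \<le> del"
  shows "gam \<le> R_weight gam del m"
proof -
  have "gam * 1 \<le> gam * (real m + 1) ^ 2"
    using assms by (intro mult_left_mono) auto
  then show ?thesis
    using R_weight_ge[OF assms, of m] by linarith
qed

lemma R_weight_pos:
  assumes "0 < gam" "gam \<le> del"
  shows "0 < R_weight gam del m"
  using R_weight_ge_gam[of gam del m] assms by linarith

lemma R_weight_mono:
  assumes "0 \<le> gam" "gam \<le> del"
  shows "R_weight gam del k \<le> R_weight gam del (Suc k)"
proof -
  have "(del - gam) * real k + 2 * gam \<le> (del - gam) * real (Suc k) + 2 * gam"
    using assms by (simp add: algebra_simps)
  moreover have "0 \<le> (del - gam) * real k + 2 * gam"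
    using assms by simp
  ultimately show ?thesis
    unfolding R_weight_def by (intro divide_right_mono mult_mono power_mono) auto
qed

lemma R_weight_eq:
  "R_weight gam del m = gam * (real m + 1) + del * ((real m + 1) * real m)
      + (del - gam) / 2 * ((real m + 1) * real m * (real m - 1))"
  by (simp add: R_weight_def power2_eq_square field_simps)

lemma R_operator_sums:
  assumes hol: "F holomorphic_on unit_disc" and z: "z \<in> unit_disc"
  shows "(\<lambda>m. R_coeff gam del F m * z ^ m) sums R_operator gam del F z"
proof -
  define a where "a m = taylor_coeff F (Suc m)" for m
  have d1: "(\<lambda>m. a m * (of_nat m + 1) * z ^ m) sums deriv F z"
    using higher_deriv_sums[OF hol z, of 1] by (simp add: a_def add.commute)
  have d2: "(\<lambda>m. a m * ((of_nat m + 1) * of_nat m) * z ^ m) sums (z * (deriv ^^ 2) F z)"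
  proof -
    have "(fact (n + 2) / fact n :: complex) = (of_nat n + 2) * (of_nat n + 1)" for n
      by (simp add: numeral_2_eq_2 field_simps)
    then have "(\<lambda>n. z * (taylor_coeff F (n + 2) * ((of_nat n + 2) * (of_nat n + 1)) * z ^ n)) sums (z * (deriv ^^ 2) F z)"
      using sums_mult[OF higher_deriv_sums[OF hol z, of 2], of z] by (simp only:)
    then have "(\<lambda>n. a (n + 1) * ((of_nat (n + 1) + 1) * of_nat (n + 1)) * z ^ (n + 1)) sums (z * (deriv ^^ 2) F z)"
      by (simp add: a_def numeral_2_eq_2 algebra_simps)
    then show ?thesis
      by (rule sums_zero_iff_shift[THEN iffD1, rotated]) simp
  qed
  have d3: "(\<lambda>m. a m * ((of_nat m + 1) * of_nat m * (of_nat m - 1)) * z ^ m) sums (z ^ 2 * (deriv ^^ 3) F z)"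
  proof -
    have "(fact (n + 3) / fact n :: complex) = (of_nat n + 3) * (of_nat n + 2) * (of_nat n + 1)" for n
      by (simp add: numeral_3_eq_3 numeral_2_eq_2 field_simps)
    then have "(\<lambda>n. z ^ 2 * (taylor_coeff F (n + 3) * ((of_nat n + 3) * (of_nat n + 2) * (of_nat n + 1)) * z ^ n))
        sums (z ^ 2 * (deriv ^^ 3) F z)"
      using sums_mult[OF higher_deriv_sums[OF hol z, of 3], of "z ^ 2"] by (simp only:)
    then have "(\<lambda>n. a (n + 2) * ((of_nat (n + 2) + 1) * of_nat (n + 2) * (of_nat (n + 2) - 1)) * z ^ (n + 2))
        sums (z ^ 2 * (deriv ^^ 3) F z)"
      by (simp add: a_def numeral_3_eq_3 numeral_2_eq_2 algebra_simps)
    then show ?thesis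
      by (rule sums_zero_iff_shift[THEN iffD1, rotated]) (auto simp: less_2_cases_iff)
  qed
  have weight_eq: "of_real (R_weight gam del m) = of_real gam * (of_nat m + 1) + of_real del * ((of_nat m + 1) * of_nat m)
      + of_real ((del - gam) / 2) * ((of_nat m + 1) * of_nat m * (of_nat m - 1) :: complex)" for m
    by (simp add: R_weight_eq)
  have "(\<lambda>m. of_real (R_weight gam del m) * a m * z ^ m) =
      (\<lambda>m. of_real gam * (a m * (of_nat m + 1) * z ^ m) + of_real del * (a m * ((of_nat m + 1) * of_nat m) * z ^ m)
        + of_real ((del - gam) / 2) * (a m * ((of_nat m + 1) * of_nat m * (of_nat m - 1)) * z ^ m))"
    unfolding weight_eq by (rule ext) algebra
  moreover have "\<dots> sums (of_real gam * deriv F z + of_real del * (z * (deriv ^^ 2) F z)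
      + of_real ((del - gam) / 2) * (z ^ 2 * (deriv ^^ 3) F z))"
    by (intro sums_add sums_mult d1 d2 d3)
  ultimately show ?thesis
    by (simp add: a_def R_coeff_def R_operator_def mult.assoc)
qed

lemma R_coeff_hadamard:
  assumes "0 < gam" "gam \<le> del" "F1 holomorphic_on unit_disc" "F2 holomorphic_on unit_disc"
  shows "R_coeff gam del (hadamard F1 F2) m =
    R_coeff gam del F1 m * R_coeff gam del F2 m / of_real (R_weight gam del m)"
  using R_weight_pos[OF assms(1,2), of m] by (simp add: R_coeff_def taylor_coeff_hadamard[OF assms(3,4)])

lemma R_coeff_0:
  assumes "F \<in> class_A"
  shows "R_coeff gam del F 0 = of_real gam"
  using assms by (simp add: R_coeff_def class_A_def taylor_coeff_def)

lemma convex_triple_mult: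
  fixes a b c x y z :: real
  assumes "b \<le> a" "c \<le> b" "0 \<le> c" "y \<le> x" "z \<le> y" "0 \<le> z"
    and "2 * b \<le> a + c" "2 * y \<le> x + z"
  shows "2 * (b * y) \<le> a * x + c * z"
proof -
  have "(2 * b - c) * (2 * y - z) \<le> a * x"
    using assms by (intro mult_mono) auto
  moreover have "0 \<le> (b - c) * (y - z)"
    using assms by simp
  ultimately show ?thesis
    by (simp add: algebra_simps)
qed

lemma inverse_midpoint_convex:
  fixes p d :: real
  assumes "0 \<le> d" "d < p"
  shows "2 / p \<le> 1 / (p - d) + 1 / (p + d)"
proof -
  have "2 / p = 2 * p / (p * p)"
    using assms by simp
  also have "\<dots> \<le> 2 * p / ((p - d) * (p + d))"
    using assms mult_strict_mono'[of d p d p] by (intro divide_left_mono) (auto simp: algebra_simps)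
  also have "\<dots> = 1 / (p - d) + 1 / (p + d)"
    using assms by (simp add: field_simps)
  finally show ?thesis .
qed

lemma inverse_square_midpoint_convex:
  fixes y :: real
  assumes "1 < y"
  shows "2 / y ^ 2 \<le> 1 / (y - 1) ^ 2 + 1 / (y + 1) ^ 2"
proof -
  have "2 / y ^ 2 \<le> 2 / ((y - 1) * (y + 1))"
    using assms by (intro divide_left_mono) (auto simp: algebra_simps power2_eq_square less_1_mult)
  also have "\<dots> = 2 * (1 / (y - 1)) * (1 / (y + 1))"
    by simp
  also have "\<dots> \<le> (1 / (y - 1)) ^ 2 + (1 / (y + 1)) ^ 2"
    by (rule sum_squares_bound)
  also have "\<dots> = 1 / (y - 1) ^ 2 + 1 / (y + 1) ^ 2"
    by (simp add: power_divide)
  finally show ?thesis .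
qed

definition R_eps :: "real \<Rightarrow> real \<Rightarrow> real \<Rightarrow> nat \<Rightarrow> real" where
  "R_eps gam del lam k = (gam - lam) / R_weight gam del k"

text \<open>For \<open>k \<ge> 1\<close> the coefficients \<open>4\<epsilon>\<^sub>k = 4(\<gamma>-\<lambda>)/c\<^sub>k\<close> turn the Hadamard product \<open>g\<^sub>k h\<^sub>k\<close> into
  \<open>4(\<gamma>-\<lambda>)\<close> times the coefficients \<open>g\<^sub>k h\<^sub>k / c\<^sub>k\<close> of the target series.\<close>
definition R_kernel :: "real \<Rightarrow> real \<Rightarrow> real \<Rightarrow> nat \<Rightarrow> complex" where
  "R_kernel gam del lam k = (if k = 0 then 1 else of_real (4 * R_eps gam del lam k))"

lemma R_kernel_0 [simp]: "R_kernel gam del lam 0 = 1"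
  by (simp add: R_kernel_def)

context
  fixes gam del lam :: real
  assumes params: "0 \<le> lam" "lam < gam" "gam \<le> del"
begin

lemma R_eps_nonneg: "0 \<le> R_eps gam del lam k"
  using R_weight_pos[of gam del k] params by (simp add: R_eps_def)

lemma R_eps_le: "R_eps gam del lam k \<le> 1 / (real k + 1) ^ 2"
proof -
  have "R_eps gam del lam k \<le> gam / (gam * (real k + 1) ^ 2)"
    unfolding R_eps_def using params R_weight_ge[of gam del k]
    by (intro frac_le) auto
  also have "\<dots> = 1 / (real k + 1) ^ 2"
    using params by simp
  finally show ?thesis .
qed

lemma R_eps_decreasing: "R_eps gam del lam (Suc k) \<le> R_eps gam del lam k"
  unfolding R_eps_def using params R_weight_mono[of gam del k] R_weight_pos[of gam del k]
  by (intro divide_left_mono) auto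

lemma R_eps_convex: "0 \<le> R_eps gam del lam k - 2 * R_eps gam del lam (k + 1) + R_eps gam del lam (k + 2)"
proof -
  define u where "u j = 1 / (real j + 1) ^ 2" for j :: nat
  define v where "v j = 2 / ((del - gam) * real j + 2 * gam)" for j :: nat
  have v_denom_pos: "0 < (del - gam) * real j + 2 * gam" for j
    using params by (simp add: add_nonneg_pos)
  have eps_eq: "R_eps gam del lam j = (gam - lam) * (u j * v j)" for j
    by (simp add: R_eps_def R_weight_def u_def v_def)
  have u_dec: "u (Suc j) \<le> u j" for j
    unfolding u_def by (intro divide_left_mono power_mono mult_pos_pos) auto
  have v_dec: "v (Suc j) \<le> v j" for j
    unfolding v_def
  proof (rule divide_left_mono)
    show "(del - gam) * real j + 2 * gam \<le> (del - gam) * real (Suc j) + 2 * gam"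
      using params by (simp add: algebra_simps)
    show "0 < ((del - gam) * real (Suc j) + 2 * gam) * ((del - gam) * real j + 2 * gam)"
      using v_denom_pos[of j] v_denom_pos[of "Suc j"] by simp
  qed simp
  have u_convex: "2 * u (k + 1) \<le> u k + u (k + 2)"
    using inverse_square_midpoint_convex[of "real k + 2"] by (simp add: u_def algebra_simps)
  have v_convex: "2 * v (k + 1) \<le> v k + v (k + 2)"
    using inverse_midpoint_convex[of "del - gam" "(del - gam) * real (k + 1) + 2 * gam"]
      params v_denom_pos[of k]
    by (simp add: v_def algebra_simps)
  have "2 * (u (k + 1) * v (k + 1)) \<le> u k * v k + u (k + 2) * v (k + 2)"
    using u_dec[of k] u_dec[of "k + 1"] v_dec[of k] v_dec[of "k + 1"] u_convex v_convex
      v_denom_pos[of "k + 2"]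
    by (intro convex_triple_mult) (auto simp: u_def v_def)
  then have "(gam - lam) * (2 * (u (k + 1) * v (k + 1))) \<le> (gam - lam) * (u k * v k + u (k + 2) * v (k + 2))"
    using params by (intro mult_left_mono) auto
  then show ?thesis
    by (simp add: eps_eq algebra_simps)
qed

lemma summable_R_eps: "summable (R_eps gam del lam)"
proof (rule summable_comparison_test'[of _ 0])
  show "summable (\<lambda>n. 1 / (real n + 1) ^ 2)"
    using inverse_squares_sums by (simp add: sums_iff add.commute)
qed (simp add: R_eps_nonneg R_eps_le)

lemma R_eps_times_index_tendsto: "(\<lambda>n. R_eps gam del lam n * (real n + 1)) \<longlonglongrightarrow> 0"
proof (rule Lim_null_comparison[OF _ LIMSEQ_inverse_real_of_nat])
  have "R_eps gam del lam n * (real n + 1) \<le> inverse (real (Suc n))" for n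
    using mult_right_mono[OF R_eps_le[of n], of "real n + 1"]
    by (simp add: power2_eq_square inverse_eq_divide add.commute)
  then show "\<forall>\<^sub>F n in sequentially. norm (R_eps gam del lam n * (real n + 1)) \<le> inverse (real (Suc n))"
    using R_eps_nonneg by (simp add: always_eventually)
qed

lemma summable_norm_R_kernel: "summable (\<lambda>k. norm (R_kernel gam del lam k))"
proof -
  have "summable (\<lambda>k. 4 * R_eps gam del lam k)"
    by (intro summable_mult summable_R_eps)
  then show ?thesis
    by (rule summable_comparison_test'[of _ 1]) (simp add: R_kernel_def R_eps_nonneg)
qed

lemma R_kernel_margin_pos: "0 < 1 - 4 * R_eps gam del lam 1 + 2 * R_eps gam del lam 2"
proof -
  have "R_eps gam del lam 1 \<le> 1 / 4"
    using R_eps_le[of 1] by simp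
  moreover have "0 < R_eps gam del lam 2"
    using params R_weight_pos[of gam del 2] by (simp add: R_eps_def)
  ultimately show ?thesis
    by linarith
qed

lemma Re_R_kernel_ge:
  assumes w: "norm w = 1"
  shows "1 - 4 * R_eps gam del lam 1 + 2 * R_eps gam del lam 2 \<le> Re (\<Sum>k. R_kernel gam del lam k * w ^ k)"
proof -
  let ?\<epsilon> = "R_eps gam del lam"
  have eps_21: "?\<epsilon> 2 \<le> ?\<epsilon> 1"
    using R_eps_decreasing[of 1] by (simp add: numeral_2_eq_2)
  \<comment> \<open>Extending \<open>\<epsilon>\<close> linearly to index 0 keeps it convex, so Fejer's inequality applies.\<close>
  define s where "s k = (if k = 0 then 2 * ?\<epsilon> 1 - ?\<epsilon> 2 else ?\<epsilon> k)" for k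
  have s_nonneg: "0 \<le> s k" for k
    using R_eps_nonneg[of k] eps_21 R_eps_nonneg[of 1] by (auto simp: s_def)
  have "summable (\<lambda>n. s (Suc n))"
    using summable_R_eps summable_Suc_iff[of "R_eps gam del lam"] by (simp add: s_def)
  then have s_summable: "summable s"
    by (simp only: summable_Suc_iff)
  have "0 \<le> (\<Sum>k. s k * fejer_cos w k)"
  proof (rule convex_cosine_series_nonneg[OF w _ _ s_nonneg s_summable])
    show "0 \<le> s k - 2 * s (k + 1) + s (k + 2)" for k
      using R_eps_convex[of k] by (cases k) (auto simp: s_def numeral_2_eq_2)
    show "s (Suc k) \<le> s k" for k
      using R_eps_decreasing[of k] eps_21 R_eps_nonneg[of 1] by (cases k) (auto simp: s_def)
    have "(\<lambda>n. s (Suc n) * (real (Suc n) + 1)) \<longlonglongrightarrow> 0"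
      using filterlim_compose[OF R_eps_times_index_tendsto filterlim_Suc] by (simp add: s_def o_def)
    then show "(\<lambda>n. s n * (real n + 1)) \<longlonglongrightarrow> 0"
      by (rule LIMSEQ_imp_Suc)
  qed
  moreover have "(\<lambda>k. Re (R_kernel gam del lam k * w ^ k)) sums (4 * (\<Sum>k. s k * fejer_cos w k) + (1 - 2 * s 0))"
  proof -
    have "summable (\<lambda>k. s k * fejer_cos w k)"
      using abs_fejer_cos_le[OF w] s_nonneg
      by (intro summable_comparison_test'[OF s_summable, of 0]) (simp add: abs_mult mult_left_le)
    from sums_mult[OF summable_sums[OF this], of 4]
    have "(\<lambda>k. 4 * (s k * fejer_cos w k) + (if k = 0 then 1 - 2 * s 0 else 0)) sums
        (4 * (\<Sum>k. s k * fejer_cos w k) + (1 - 2 * s 0))"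
      by (rule sums_add) (use sums_single[of 0 "\<lambda>_. 1 - 2 * s 0"] in simp)
    moreover have "Re (R_kernel gam del lam k * w ^ k) = 4 * (s k * fejer_cos w k) + (if k = 0 then 1 - 2 * s 0 else 0)" for k
      by (simp add: R_kernel_def s_def fejer_cos_def field_simps)
    ultimately show ?thesis
      by simp
  qed
  moreover have "summable (\<lambda>k. R_kernel gam del lam k * w ^ k)"
    by (rule summable_comparison_test'[OF summable_norm_R_kernel, of 0]) (simp add: norm_mult norm_power w)
  ultimately show ?thesis
    by (simp add: Re_suminf sums_iff s_def)
qed

lemma Re_R_kernel_hadamard_gt:
  fixes a b :: "nat \<Rightarrow> complex" and \<zeta> :: complex
  assumes a: "summable (\<lambda>n. norm (a n))" and b: "summable (\<lambda>n. norm (b n))"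
    and a0: "a 0 = of_real gam" and b0: "b 0 = of_real gam"
    and Re_a: "\<And>w. norm w = 1 \<Longrightarrow> lam \<le> Re (\<Sum>n. a n * w ^ n)"
    and Re_b: "\<And>w. norm w = 1 \<Longrightarrow> lam \<le> Re (\<Sum>n. b n * w ^ n)"
    and \<zeta>: "norm \<zeta> = 1"
  shows "gam ^ 2 - 4 * (gam - lam) ^ 2 < Re (\<Sum>n. R_kernel gam del lam n * a n * b n * \<zeta> ^ n)"
proof -
  define c where "c = 1 - 4 * R_eps gam del lam 1 + 2 * R_eps gam del lam 2"
  have c: "0 < c" "\<And>w. norm w = 1 \<Longrightarrow> c \<le> Re (\<Sum>k. R_kernel gam del lam k * w ^ k)"
    unfolding c_def using R_kernel_margin_pos Re_R_kernel_ge by auto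
  define \<beta> where "\<beta> n = b n * R_kernel gam del lam n" for n
  have \<beta>: "summable (\<lambda>n. norm (\<beta> n))"
    unfolding \<beta>_def by (rule summable_norm_mult[OF b summable_norm_R_kernel])
  have Re_\<beta>: "2 * c * (gam - lam) - (gam - 2 * lam) \<le> Re (\<Sum>n. \<beta> n * w ^ n)" if "norm w = 1" for w
    using Re_hadamard_boundary_ge[OF b summable_norm_R_kernel b0 Re_b c(2) that] by (simp add: \<beta>_def)
  have "2 * (2 * c * (gam - lam) - (gam - 2 * lam)) * (gam - lam) - Re (\<beta> 0) * (gam - 2 * lam)
      \<le> Re (\<Sum>n. a n * \<beta> n * \<zeta> ^ n)"
    by (rule Re_hadamard_boundary_ge[OF a \<beta> a0 Re_a Re_\<beta> \<zeta>])
  moreover have "\<beta> 0 = of_real gam"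
    using b0 by (simp add: \<beta>_def)
  moreover have "(\<Sum>n. a n * \<beta> n * \<zeta> ^ n) = (\<Sum>n. R_kernel gam del lam n * a n * b n * \<zeta> ^ n)"
    by (simp add: \<beta>_def mult_ac)
  moreover have "2 * (2 * c * (gam - lam) - (gam - 2 * lam)) * (gam - lam) - gam * (gam - 2 * lam)
      = gam ^ 2 - 4 * (gam - lam) ^ 2 + 4 * (c * (gam - lam) ^ 2)"
    by (simp add: algebra_simps power2_eq_square)
  moreover have "0 < c * (gam - lam) ^ 2"
    using c params by simp
  ultimately show ?thesis
    by simp
qed

lemma R_kernel_dilated_sums:
  fixes g1 g2 :: "nat \<Rightarrow> complex" and r :: real and \<zeta> :: complex
  assumes a: "summable (\<lambda>n. norm (g1 n * of_real r ^ n))" and b: "summable (\<lambda>n. norm (g2 n * of_real r ^ n))"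
    and g10: "g1 0 = of_real gam" and g20: "g2 0 = of_real gam"
    and r: "0 \<le> r" and \<zeta>: "norm \<zeta> = 1"
  defines "z \<equiv> of_real r ^ 2 * \<zeta>"
  shows "(\<lambda>n. R_kernel gam del lam n * (g1 n * of_real r ^ n) * (g2 n * of_real r ^ n) * \<zeta> ^ n) sums
    (of_real (4 * (gam - lam)) * (\<Sum>n. g1 n * g2 n / of_real (R_weight gam del n) * z ^ n)
      + of_real (gam ^ 2 - 4 * (gam - lam) * gam))"
proof -
  define T where "T n = g1 n * g2 n / of_real (R_weight gam del n) * z ^ n" for n
  define K where "K = gam ^ 2 - 4 * (gam - lam) * gam"
  have kernel_eq: "R_kernel gam del lam n * (g1 n * of_real r ^ n) * (g2 n * of_real r ^ n) * \<zeta> ^ n =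
      of_real (4 * (gam - lam)) * T n + (if n = 0 then of_real K else 0)" for n
  proof (cases "n = 0")
    case True
    then show ?thesis
      using params by (simp add: T_def K_def g10 g20 power2_eq_square field_simps)
  next
    case False
    have "of_real r ^ n * of_real r ^ n * \<zeta> ^ n = z ^ n"
      by (simp add: z_def power_mult_distrib power2_eq_square)
    then show ?thesis
      using False R_weight_pos[of gam del n] params
      by (simp add: R_kernel_def R_eps_def T_def mult_ac)
  qed
  have "summable (\<lambda>n. norm (T n))"
  proof (rule summable_comparison_test'[OF summable_mult2[OF summable_norm_mult[OF a b], of "1 / gam"], of 0])
    fix n
    have "norm (T n) = norm (g1 n * of_real r ^ n * (g2 n * of_real r ^ n)) / R_weight gam del n"
      using \<zeta> R_weight_pos[of gam del n] params r
      by (simp add: T_def z_def norm_mult norm_divide norm_power power_mult_distrib power2_eq_square mult_ac)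
    also have "\<dots> \<le> norm (g1 n * of_real r ^ n * (g2 n * of_real r ^ n)) / gam"
      using params R_weight_pos[of gam del n] R_weight_ge_gam[of gam del n] by (intro divide_left_mono) auto
    finally show "norm (norm (T n)) \<le> norm (g1 n * of_real r ^ n * (g2 n * of_real r ^ n)) * (1 / gam)"
      by simp
  qed
  then have "(\<lambda>n. of_real (4 * (gam - lam)) * T n + (if n = 0 then of_real K else 0)) sums
      (of_real (4 * (gam - lam)) * (\<Sum>n. T n) + of_real K)"
    by (intro sums_add sums_mult summable_sums summable_norm_cancel[of T])
       (use sums_single[of 0 "\<lambda>_. of_real K"] in simp_all)
  then show ?thesis
    by (simp only: kernel_eq T_def K_def)
qed

lemma Re_weighted_hadamard_gt:
  fixes g1 g2 :: "nat \<Rightarrow> complex"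
  assumes summable1: "\<And>w. w \<in> unit_disc \<Longrightarrow> summable (\<lambda>m. g1 m * w ^ m)"
    and summable2: "\<And>w. w \<in> unit_disc \<Longrightarrow> summable (\<lambda>m. g2 m * w ^ m)"
    and Re1: "\<And>w. w \<in> unit_disc \<Longrightarrow> lam < Re (\<Sum>m. g1 m * w ^ m)"
    and Re2: "\<And>w. w \<in> unit_disc \<Longrightarrow> lam < Re (\<Sum>m. g2 m * w ^ m)"
    and g10: "g1 0 = of_real gam" and g20: "g2 0 = of_real gam"
    and z: "z \<in> unit_disc"
  shows "lam < Re (\<Sum>m. g1 m * g2 m / of_real (R_weight gam del m) * z ^ m)"
proof (cases "z = 0")
  case True
  then show ?thesis
    using g10 g20 params powser_zero[of "\<lambda>m. g1 m * g2 m / of_real (R_weight gam del m)"]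
    by (simp add: power2_eq_square)
next
  case False
  define r where "r = sqrt (norm z)"
  define \<zeta> where "\<zeta> = z / of_real (norm z)"
  have r: "0 \<le> r" "r < 1"
    using z by (auto simp: r_def real_sqrt_lt_1_iff)
  have \<zeta>: "norm \<zeta> = 1"
    using False by (simp add: \<zeta>_def norm_divide)
  have z_eq: "z = of_real r ^ 2 * \<zeta>"
    using False by (simp add: \<zeta>_def r_def flip: of_real_power)
  define a where "a n = g1 n * of_real r ^ n" for n
  define b where "b n = g2 n * of_real r ^ n" for n
  have a: "summable (\<lambda>n. norm (a n))" and b: "summable (\<lambda>n. norm (b n))"
    unfolding a_def b_def using summable_norm_dilated summable1 summable2 r by blast+
  have r_disc: "of_real r * w \<in> unit_disc" if "norm w = 1" for w
    using that r by (simp add: norm_mult)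
  have Re_a: "lam \<le> Re (\<Sum>n. a n * w ^ n)" and Re_b: "lam \<le> Re (\<Sum>n. b n * w ^ n)"
    if "norm w = 1" for w
    using Re1[OF r_disc[OF that]] Re2[OF r_disc[OF that]]
    by (simp_all add: a_def b_def power_mult_distrib mult.assoc)
  have "gam ^ 2 - 4 * (gam - lam) ^ 2 < Re (\<Sum>n. R_kernel gam del lam n * a n * b n * \<zeta> ^ n)"
    by (rule Re_R_kernel_hadamard_gt[OF a b _ _ Re_a Re_b \<zeta>]) (simp_all add: a_def b_def g10 g20)
  also have "(\<Sum>n. R_kernel gam del lam n * a n * b n * \<zeta> ^ n) =
      of_real (4 * (gam - lam)) * (\<Sum>m. g1 m * g2 m / of_real (R_weight gam del m) * z ^ m)
      + of_real (gam ^ 2 - 4 * (gam - lam) * gam)"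
    using R_kernel_dilated_sums[OF a[unfolded a_def] b[unfolded b_def] g10 g20 r(1) \<zeta>]
    by (simp add: a_def b_def z_eq sums_iff)
  finally have "4 * (gam - lam) * lam < 4 * (gam - lam) * Re (\<Sum>m. g1 m * g2 m / of_real (R_weight gam del m) * z ^ m)"
    by (simp add: algebra_simps power2_eq_square)
  then show ?thesis
    using params by simp
qed

end

theorem lemma15:
  fixes gam del lam :: real and F1 F2 :: "complex \<Rightarrow> complex"
  assumes "0 \<le> lam" "lam < gam" "gam \<le> del"
    and "F1 \<in> class_R gam del lam" "F2 \<in> class_R gam del lam"
  shows "hadamard F1 F2 \<in> class_R gam del lam"
proof -
  have A: "F1 \<in> class_A" "F2 \<in> class_A"
    and R: "\<And>z. z \<in> unit_disc \<Longrightarrow> lam < Re (R_operator gam del F1 z)"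
      "\<And>z. z \<in> unit_disc \<Longrightarrow> lam < Re (R_operator gam del F2 z)"
    using assms(4,5) by (simp_all add: class_R_def R_operator_def)
  then have hol: "F1 holomorphic_on unit_disc" "F2 holomorphic_on unit_disc"
    by (simp_all add: class_A_def)
  have "lam < Re (R_operator gam del (hadamard F1 F2) z)" if z: "z \<in> unit_disc" for z
  proof -
    have "R_operator gam del (hadamard F1 F2) z =
        (\<Sum>m. R_coeff gam del F1 m * R_coeff gam del F2 m / of_real (R_weight gam del m) * z ^ m)"
      using R_operator_sums[OF holomorphic_on_hadamard[OF hol] z, of gam del] assms(1,2)
      by (simp add: R_coeff_hadamard[OF _ assms(3) hol] sums_iff)
    moreover have "lam < Re (\<Sum>m. R_coeff gam del F1 m * R_coeff gam del F2 m / of_real (R_weight gam del m) * z ^ m)"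
      using R_operator_sums[OF hol(1)] R_operator_sums[OF hol(2)] R R_coeff_0[OF A(1)] R_coeff_0[OF A(2)] z
      by (intro Re_weighted_hadamard_gt[OF assms(1-3)]) (auto simp: sums_iff)
    ultimately show ?thesis
      by simp
  qed
  then show ?thesis
    using hadamard_in_class_A[OF A] by (simp add: class_R_def R_operator_def)
qed

end
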